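(* Let $w=w_0w_1w_2\ldots$ be a one-sided infinite word over a finite alphabet $\mathcal A=\{a_1,\dots,a_k\}$ and fix $1\le j\le k$ such that $a_j$ occurs infinitely often in $w$. If the difference sequence $(p_j(n)-p_j(n-1))_{n\ge2}$ takes only finitely many values, then $P_{a_j}(X)\in\mathbb{Q}(X)$ if the sequence $(1_{a_j}(w_n))_{n\ge0}$ is eventually periodic, and $P_{a_j}(X)$ is transcendental over $\mathbb{Q}(X)$ if $(1_{a_j}(w_n))_{n\ge0}$ is not eventually periodic.
   Context: Positions in $w$ are indexed starting from $0$. For $n\ge1$, $p_j(n)$ denotes the position of the $n$-th occurrence of $a_j$ in $w$, and $P_{a_j}(X)=\sum_{n\ge1}p_j(n)X^n$. $1_{a_j}$ is the indicator function of $a_j$. A sequence is eventually periodic if there exist $N$, $d\ge1$ with $s_{n+d}=s_n$ for all $n\ge N$. Transcendence over $\mathbb{Q}(X)$ is meant inside $\mathbb{C}((X))$. *)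

theory Defs
  imports "HOL-Computational_Algebra.Computational_Algebra" "HOL-Library.Infinite_Set"
begin

text \<open>Position (indexed from 0) of the n-th occurrence (n \<ge> 1) of letter a in w.\<close>
definition occ_pos :: "(nat \<Rightarrow> 'a) \<Rightarrow> 'a \<Rightarrow> nat \<Rightarrow> nat" where
  "occ_pos w a n = enumerate {i. w i = a} (n - 1)"

definition pos_series :: "(nat \<Rightarrow> 'a) \<Rightarrow> 'a \<Rightarrow> complex fps" where
  "pos_series w a = Abs_fps (\<lambda>n. if n = 0 then 0 else of_nat (occ_pos w a n))"

definition indicator_seq :: "(nat \<Rightarrow> 'a) \<Rightarrow> 'a \<Rightarrow> nat \<Rightarrow> nat" where
  "indicator_seq w a n = (if w n = a then 1 else 0)"

definition eventually_periodic :: "(nat \<Rightarrow> 'b) \<Rightarrow> bool" where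
  "eventually_periodic s \<longleftrightarrow> (\<exists>N d. d \<ge> 1 \<and> (\<forall>n\<ge>N. s (n + d) = s n))"

definition ratpoly_fps :: "rat poly \<Rightarrow> complex fps" where
  "ratpoly_fps q = fps_of_poly (map_poly of_rat q)"

definition in_rat_fun_field :: "complex fps \<Rightarrow> bool" where
  "in_rat_fun_field F \<longleftrightarrow> (\<exists>A B. B \<noteq> 0 \<and> ratpoly_fps B * F = ratpoly_fps A)"

text \<open>F is transcendental over Q(X): no nonzero polynomial in Y with coefficients in Q(X)
  vanishes at F; after clearing denominators, coefficients may be taken in Q[X].\<close>
definition transcendental_rat_fun :: "complex fps \<Rightarrow> bool" where
  "transcendental_rat_fun F \<longleftrightarrow>
     (\<forall>Q :: rat poly poly. Q \<noteq> 0 \<longrightarrow> poly (map_poly ratpoly_fps Q) F \<noteq> 0)"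

end

theory Submission
  imports Defs
begin

text \<open>Let \<open>F = P_a\<close> and \<open>G = (1 - X) F\<close>. The coefficients of \<open>G\<close> are \<open>0\<close>, \<open>p(1)\<close> and the gaps
  \<open>p(n) - p(n-1)\<close>, so they take finitely many values, and they are eventually periodic exactly when
  the indicator sequence of \<open>a\<close> is. If they have period \<open>m\<close>, then \<open>(1 - X^m) G\<close> is a polynomial and
  \<open>F\<close> is rational. If \<open>F\<close>, hence \<open>G\<close>, were algebraic over \<open>Q(X)\<close>, then \<open>G\<close> would be D-finite
  (its derivatives all lie in the finite-dimensional \<open>C(X)\<close>-space spanned by its powers), so its
  coefficients would satisfy a linear recurrence with polynomial coefficients; a sequence with
  finitely many values satisfying such a recurrence is eventually periodic.\<close>

lemma exists_nontrivial_linear_solution: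
  fixes f :: "'i \<Rightarrow> 'k \<Rightarrow> 'a::field"
  assumes "finite K" "finite I" "card K < card I"
  shows "\<exists>lam. (\<exists>i\<in>I. lam i \<noteq> 0) \<and> (\<forall>k\<in>K. (\<Sum>i\<in>I. lam i * f i k) = 0)"
  using assms
proof (induction K arbitrary: I f rule: finite_induct)
  case empty
  then obtain i where "i \<in> I" by fastforce
  then show ?case by (intro exI[of _ "\<lambda>_. 1"]) auto
next
  case (insert k0 K)
  show ?case
  proof (cases "\<exists>i\<in>I. f i k0 \<noteq> 0")
    case False
    have "card K < card I" using insert by simp
    from insert.IH[OF insert.prems(1) this] obtain lam where
      "\<exists>i\<in>I. lam i \<noteq> 0" "\<forall>k\<in>K. (\<Sum>i\<in>I. lam i * f i k) = 0" by blast
    with False show ?thesis by (intro exI[of _ lam]) auto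
  next
    case True
    then obtain i0 where i0: "i0 \<in> I" "f i0 k0 \<noteq> 0" by blast
    define I' where "I' = I - {i0}"
    \<comment> \<open>eliminate the unknown \<open>i0\<close> using the equation \<open>k0\<close>\<close>
    define g where "g i k = f i k - (f i k0 / f i0 k0) * f i0 k" for i k
    have "finite I'" "card K < card I'" using insert i0 by (simp_all add: I'_def)
    from insert.IH[OF this, of g] obtain mu where
      mu: "\<exists>i\<in>I'. mu i \<noteq> 0" "\<forall>k\<in>K. (\<Sum>i\<in>I'. mu i * g i k) = 0" by blast
    define lam where
      "lam i = (if i = i0 then - (\<Sum>j\<in>I'. mu j * f j k0) / f i0 k0 else mu i)" for i
    have lam_mu: "(\<Sum>i\<in>I. lam i * f i k) = (\<Sum>i\<in>I'. mu i * g i k)" for k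
    proof -
      have "(\<Sum>i\<in>I. lam i * f i k) = lam i0 * f i0 k + (\<Sum>i\<in>I'. lam i * f i k)"
        using insert.prems i0 unfolding I'_def by (simp add: sum.remove)
      also have "(\<Sum>i\<in>I'. lam i * f i k) = (\<Sum>i\<in>I'. mu i * f i k)"
        by (rule sum.cong) (auto simp: lam_def I'_def)
      also have "lam i0 * f i0 k + (\<Sum>i\<in>I'. mu i * f i k) = (\<Sum>i\<in>I'. mu i * g i k)"
        by (simp add: lam_def g_def algebra_simps sum_subtractf sum_distrib_left
            sum_distrib_right sum_divide_distrib)
      finally show ?thesis .
    qed
    show ?thesis
    proof (intro exI[of _ lam] conjI ballI)
      from mu(1) obtain i where "i \<in> I'" "mu i \<noteq> 0" by blast
      then show "\<exists>i\<in>I. lam i \<noteq> 0" by (intro bexI[of _ i]) (auto simp: lam_def I'_def)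
    next
      fix k assume "k \<in> insert k0 K"
      moreover have "g i k0 = 0" for i using i0 by (simp add: g_def)
      ultimately show "(\<Sum>i\<in>I. lam i * f i k) = 0" using lam_mu mu(2) by auto
    qed
  qed
qed

text \<open>Count coefficients: multipliers of degree at most \<open>M = d B\<close> give \<open>(M+1)(d+1)\<close> unknowns,
  while the \<open>d\<close> combinations have degree at most \<open>B + M\<close>, which imposes only \<open>d (B+M+1)\<close>
  linear conditions.\<close>
lemma poly_vectors_linearly_dependent:
  fixes r :: "nat \<Rightarrow> nat \<Rightarrow> 'a::field poly"
  shows "\<exists>lam. (\<exists>i\<le>d. lam i \<noteq> 0) \<and> (\<forall>l<d. (\<Sum>i\<le>d. lam i * r i l) = 0)"
proof -
  define B where "B = (\<Sum>i\<le>d. \<Sum>l<d. degree (r i l))"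
  have degB: "degree (r i l) \<le> B" if "i \<le> d" "l < d" for i l
  proof -
    have "degree (r i l) \<le> (\<Sum>l<d. degree (r i l))" using that by (intro member_le_sum) auto
    also have "\<dots> \<le> B" unfolding B_def using that by (intro member_le_sum) auto
    finally show ?thesis .
  qed
  define M where "M = d * B"
  define I where "I = {..M} \<times> {..d}"
  define K where "K = {..<d} \<times> {..B+M}"
  define f where "f ji lk = coeff (monom 1 (fst ji) * r (snd ji) (fst lk)) (snd lk)"
    for ji lk :: "nat \<times> nat"
  have "card K < card I"
    unfolding I_def K_def M_def by (simp add: card_cartesian_product algebra_simps)
  then obtain c where c_nz: "\<exists>ji\<in>I. c ji \<noteq> 0" and c_sol: "\<forall>lk\<in>K. (\<Sum>ji\<in>I. c ji * f ji lk) = 0"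
    using exists_nontrivial_linear_solution[of K I f] unfolding I_def K_def by auto
  define lam where "lam i = (\<Sum>j\<le>M. monom (c (j, i)) j)" for i
  have "(\<Sum>i\<le>d. lam i * r i l) = (\<Sum>ji\<in>I. smult (c ji) (monom 1 (fst ji) * r (snd ji) l))"
    for l
  proof -
    have "(\<Sum>i\<le>d. lam i * r i l) = (\<Sum>i\<le>d. \<Sum>j\<le>M. smult (c (j, i)) (monom 1 j * r i l))"
      by (simp add: lam_def sum_distrib_right smult_monom flip: mult_smult_left)
    also have "\<dots> = (\<Sum>j\<le>M. \<Sum>i\<le>d. smult (c (j, i)) (monom 1 j * r i l))"
      by (rule sum.swap)
    also have "\<dots> = (\<Sum>(j, i)\<in>I. smult (c (j, i)) (monom 1 j * r i l))"
      unfolding I_def by (rule sum.cartesian_product)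
    also have "\<dots> = (\<Sum>ji\<in>I. smult (c ji) (monom 1 (fst ji) * r (snd ji) l))"
      by (simp only: case_prod_unfold prod.collapse)
    finally show ?thesis .
  qed
  moreover have "(\<Sum>ji\<in>I. smult (c ji) (monom 1 (fst ji) * r (snd ji) l)) = 0" if "l < d" for l
  proof (rule poly_eqI)
    fix k
    show "coeff (\<Sum>ji\<in>I. smult (c ji) (monom 1 (fst ji) * r (snd ji) l)) k = coeff 0 k"
    proof (cases "k \<le> B + M")
      case True
      then have "(l, k) \<in> K" using that by (simp add: K_def)
      from bspec[OF c_sol this] show ?thesis by (simp add: coeff_sum f_def)
    next
      case False
      have "coeff (monom 1 (fst ji) * r (snd ji) l) k = 0" if "ji \<in> I" for ji
      proof (rule coeff_eq_0)
        have "degree (monom (1::'a) (fst ji) * r (snd ji) l)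
            \<le> degree (monom (1::'a) (fst ji)) + degree (r (snd ji) l)"
          by (rule degree_mult_le)
        also have "\<dots> \<le> M + B"
          using that degB[of "snd ji" l] \<open>l < d\<close> degree_monom_le[of "1::'a" "fst ji"]
          by (auto simp: I_def)
        finally show "degree (monom 1 (fst ji) * r (snd ji) l) < k" using False by simp
      qed
      then show ?thesis by (simp add: coeff_sum)
    qed
  qed
  moreover obtain j0 i0 where "(j0, i0) \<in> I" "c (j0, i0) \<noteq> 0" using c_nz by auto
  then have "coeff (lam i0) j0 \<noteq> 0" "i0 \<le> d"
    by (auto simp: lam_def I_def coeff_sum coeff_monom sum.delta)
  ultimately show ?thesis by (metis coeff_0)
qed


definition p_recursive :: "(nat \<Rightarrow> 'a::comm_semiring_1) \<Rightarrow> bool" where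
  "p_recursive g \<longleftrightarrow>
     (\<exists>R q. (\<exists>t\<le>R. q t \<noteq> 0) \<and> (\<forall>n. (\<Sum>t\<le>R. poly (q t) (of_nat n) * g (n + t)) = 0))"

text \<open>The last \<open>T\<close> values determine the next one, and only finitely many windows of length
  \<open>T\<close> occur, so some window repeats.\<close>
lemma linear_recurrence_imp_eventually_periodic:
  fixes g :: "nat \<Rightarrow> 'a::field" and c :: "nat \<Rightarrow> 'a"
  assumes fin: "finite (range g)" and nz: "\<exists>t\<le>R. c t \<noteq> 0"
    and rec: "\<And>n. n \<ge> N0 \<Longrightarrow> (\<Sum>t\<le>R. c t * g (n + t)) = 0"
  shows "eventually_periodic g"
proof -
  define T where "T = Max {t. t \<le> R \<and> c t \<noteq> 0}"
  have finT: "finite {t. t \<le> R \<and> c t \<noteq> 0}" by simp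
  have T: "T \<le> R" "c T \<noteq> 0"
    using Max_in[OF finT] nz unfolding T_def by auto
  have T_max: "c t = 0" if "T < t" "t \<le> R" for t
    using Max_ge[OF finT, of t] that unfolding T_def by fastforce
  have next_value: "g (n + T) = - (\<Sum>t<T. c t * g (n + t)) / c T" if "n \<ge> N0" for n
  proof -
    have "(\<Sum>t\<le>R. c t * g (n + t)) = (\<Sum>t\<le>T. c t * g (n + t))"
      by (rule sum.mono_neutral_right) (use T T_max in auto)
    also have "\<dots> = (\<Sum>t<T. c t * g (n + t)) + c T * g (n + T)"
      by (simp add: lessThan_Suc_atMost[symmetric])
    finally show ?thesis using rec[OF that] T by (simp add: field_simps eq_neg_iff_add_eq_0)
  qed
  define window where "window n = restrict (\<lambda>t. g (n + t)) {..<T}" for n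
  have "window ` {N0..} \<subseteq> PiE {..<T} (\<lambda>_. range g)"
    unfolding window_def by (auto simp: PiE_def extensional_def)
  then have "finite (window ` {N0..})"
    by (rule finite_subset) (intro finite_PiE; simp add: fin)
  then obtain a where a: "a \<ge> N0" "infinite {b\<in>{N0..}. window b = window a}"
    using pigeonhole_infinite[OF infinite_Ici] by auto
  then obtain b where b: "b > a" "window b = window a"
    unfolding infinite_nat_iff_unbounded by blast
  have same: "g (a + j) = g (b + j)" for j
  proof (induction j rule: less_induct)
    case (less j)
    show ?case
    proof (cases "j < T")
      case True
      then show ?thesis using fun_cong[OF b(2), of j] by (simp add: window_def)
    next
      case False
      then obtain i where j: "j = i + T" by (metis add.commute le_Suc_ex not_less)
      have "c t * g (a + i + t) = c t * g (b + i + t)" if "t < T" for t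
        using less.IH[of "i + t"] that j by (simp add: add.assoc)
      then have "(\<Sum>t<T. c t * g (a + i + t)) = (\<Sum>t<T. c t * g (b + i + t))"
        by (intro sum.cong) auto
      moreover have "a + i \<ge> N0" "b + i \<ge> N0" using a b by auto
      ultimately show ?thesis
        using next_value[of "a + i"] next_value[of "b + i"] j by (simp add: add.assoc)
    qed
  qed
  have "g (n + (b - a)) = g n" if "a \<le> n" for n
    using same[of "n - a"] b that by (simp add: algebra_simps)
  moreover have "b - a \<ge> 1" using b by simp
  ultimately show ?thesis unfolding eventually_periodic_def by blast
qed

lemma finite_nat_roots:
  fixes p :: "'a::{idom, ring_char_0} poly"
  assumes "p \<noteq> 0"
  shows "finite {n::nat. poly p (of_nat n) = 0}"
  using finite_vimageI[OF poly_roots_finite[OF assms], of of_nat] inj_of_nat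
  by (simp add: vimage_def)

lemma coeff_Max_degree_nonzero:
  fixes q :: "'i \<Rightarrow> 'a::zero poly"
  assumes "finite T" "\<exists>t\<in>T. q t \<noteq> 0"
  shows "\<exists>t\<in>T. coeff (q t) (Max ((\<lambda>t. degree (q t)) ` T)) \<noteq> 0"
proof -
  define D where "D = Max ((\<lambda>t. degree (q t)) ` T)"
  obtain t0 where t0: "t0 \<in> T" "q t0 \<noteq> 0" using assms(2) by blast
  have "D \<in> (\<lambda>t. degree (q t)) ` T" unfolding D_def using assms by (intro Max_in) auto
  then obtain t2 where t2: "t2 \<in> T" "degree (q t2) = D" by auto
  have "degree (q t0) \<le> D" unfolding D_def using assms t0 by (intro Max_ge) auto
  then have "q t2 \<noteq> 0 \<or> degree (q t0) = D" using t2 by auto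
  then show ?thesis
    using t0 t2 unfolding D_def[symmetric] by (metis leading_coeff_0_iff)
qed

text \<open>Along a window \<open>v\<close> of \<open>R+1\<close> consecutive values the recurrence says that the polynomial
  \<open>\<Sum>t. v t q t\<close> vanishes at \<open>n\<close>. Only finitely many windows occur, so from some point on these
  polynomials vanish identically, and their coefficients of the top degree \<open>D\<close> of the \<open>q t\<close> give a
  recurrence with constant coefficients.\<close>
lemma p_recursive_imp_eventually_periodic:
  fixes g :: "nat \<Rightarrow> 'a::field_char_0"
  assumes fin: "finite (range g)" and "p_recursive g"
  shows "eventually_periodic g"
proof -
  obtain R q where nz: "\<exists>t\<le>R. q t \<noteq> 0"
    and rec: "\<And>n. (\<Sum>t\<le>R. poly (q t) (of_nat n) * g (n + t)) = 0"
    using assms(2) unfolding p_recursive_def by blast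
  define D where "D = Max ((\<lambda>t. degree (q t)) ` {..R})"
  obtain t1 where t1: "t1 \<le> R" "coeff (q t1) D \<noteq> 0"
    using coeff_Max_degree_nonzero[of "{..R}" q] nz unfolding D_def by auto
  define P where "P v = (\<Sum>t\<le>R. smult (v t) (q t))" for v :: "nat \<Rightarrow> 'a"
  define window where "window n = restrict (\<lambda>t. g (n + t)) {..R}" for n
  have P_root: "poly (P (window n)) (of_nat n) = 0" for n
    using rec[of n] unfolding P_def window_def by (simp add: poly_sum mult.commute)
  have "range window \<subseteq> PiE {..R} (\<lambda>_. range g)"
    unfolding window_def by (auto simp: PiE_def extensional_def)
  then have fin_windows: "finite (range window)"
    by (rule finite_subset) (intro finite_PiE; simp add: fin)
  have "{n. P (window n) \<noteq> 0} \<subseteq> (\<Union>v\<in>range window \<inter> {v. P v \<noteq> 0}. {n. poly (P v) (of_nat n) = 0})"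
    using P_root by auto
  moreover have "finite (\<Union>v\<in>range window \<inter> {v. P v \<noteq> 0}. {n. poly (P v) (of_nat n) = 0})"
    using fin_windows by (intro finite_UN_I) (auto intro!: finite_nat_roots)
  ultimately have "finite {n. P (window n) \<noteq> 0}" by (rule finite_subset)
  then obtain N0 where N0: "\<And>n. P (window n) \<noteq> 0 \<Longrightarrow> n < N0"
    using finite_nat_set_iff_bounded by auto
  show ?thesis
  proof (rule linear_recurrence_imp_eventually_periodic[OF fin, of R "\<lambda>t. coeff (q t) D" N0])
    fix n assume "N0 \<le> n"
    then have "P (window n) = 0" using N0 leD by blast
    then have "coeff (P (window n)) D = 0" by simp
    then show "(\<Sum>t\<le>R. coeff (q t) D * g (n + t)) = 0"
      unfolding P_def by (simp add: coeff_sum window_def mult.commute)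
  qed (use t1 in blast)
qed

definition dfinite :: "'a::field_char_0 fps \<Rightarrow> bool" where
  "dfinite G \<longleftrightarrow>
     (\<exists>r A. (\<exists>i\<le>r. A i \<noteq> 0) \<and> (\<Sum>i\<le>r. fps_of_poly (A i) * (fps_deriv ^^ i) G) = 0)"

lemma fps_nth_deriv_iterate:
  fixes G :: "'a::comm_ring_1 fps"
  shows "(fps_deriv ^^ i) G $ m = pochhammer (of_nat m + 1) i * G $ (m + i)"
proof (induction i arbitrary: m)
  case (Suc i)
  have "(fps_deriv ^^ Suc i) G $ m = of_nat (m + 1) * (fps_deriv ^^ i) G $ (m + 1)"
    by (simp add: fps_deriv_nth)
  also have "\<dots> = pochhammer (of_nat m + 1) (Suc i) * G $ (m + Suc i)"
    using Suc by (simp add: pochhammer_rec algebra_simps)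
  finally show ?case .
qed simp

lemma poly_pochhammer_linear:
  fixes c x :: "'a::comm_ring_1"
  shows "poly (pochhammer [:c, 1:] i) x = pochhammer (c + x) i"
  by (induction i) (simp_all add: pochhammer_rec' algebra_simps)

lemma pochhammer_linear_monic:
  fixes c :: "'a::comm_ring_1"
  shows "degree (pochhammer [:c, 1:] i) \<le> i \<and> coeff (pochhammer [:c, 1:] i) i = 1"
proof (induction i)
  case (Suc n)
  have "[:c, 1:] + (of_nat n :: 'a poly) = [:c + of_nat n, 1:]"
    by (simp add: of_nat_poly)
  then have step: "pochhammer [:c, 1:] (Suc n)
      = smult (c + of_nat n) (pochhammer [:c, 1:] n) + pCons 0 (pochhammer [:c, 1:] n)"
    by (simp add: pochhammer_rec')
  have "degree (pochhammer [:c, 1:] (Suc n)) \<le> Suc n"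
    unfolding step using Suc
    by (intro degree_add_le) (auto intro: order.trans[OF degree_pCons_le] order.trans[OF degree_smult_le])
  moreover have "coeff (pochhammer [:c, 1:] (Suc n)) (Suc n) = 1"
    unfolding step using Suc by (simp add: coeff_eq_0)
  ultimately show ?case by blast
qed simp

text \<open>The coefficient of \<open>X^(n+K)\<close> in \<open>A_i(X) G^(i)(X)\<close> is
  \<open>\<Sum>k. a_ik (n+K-k+1)^(i) g_(n+K-k+i)\<close> with rising factorials \<open>x^(i)\<close>; collecting the terms
  by the shift \<open>t = K - k + i\<close> gives the polynomial coefficients of the recurrence.\<close>
definition dfinite_recurrence_coeff ::
    "(nat \<Rightarrow> 'a::comm_ring_1 poly) \<Rightarrow> nat \<Rightarrow> nat \<Rightarrow> nat \<Rightarrow> 'a poly" where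
  "dfinite_recurrence_coeff A r K t =
     (\<Sum>i\<le>r. \<Sum>k\<le>K. if t = K - k + i
        then smult (coeff (A i) k) (pochhammer [:of_nat (K - k) + 1, 1:] i) else 0)"

lemma dfinite_recurrence:
  fixes G :: "'a::comm_ring_1 fps"
  assumes deg: "\<And>i. i \<le> r \<Longrightarrow> degree (A i) \<le> K"
    and eq: "(\<Sum>i\<le>r. fps_of_poly (A i) * (fps_deriv ^^ i) G) = 0"
  shows "(\<Sum>t\<le>K + r. poly (dfinite_recurrence_coeff A r K t) (of_nat n) * G $ (n + t)) = 0"
proof -
  define summand where "summand i k t =
    (if t = K - k + i then coeff (A i) k * pochhammer (of_nat (K - k) + 1 + of_nat n) i * G $ (n + t)
     else 0)" for i k t
  have nth: "(fps_of_poly (A i) * (fps_deriv ^^ i) G) $ (n + K) = (\<Sum>k\<le>K. \<Sum>t\<le>K + r. summand i k t)"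
    if "i \<le> r" for i
  proof -
    have "(fps_of_poly (A i) * (fps_deriv ^^ i) G) $ (n + K)
        = (\<Sum>k=0..n + K. coeff (A i) k * (fps_deriv ^^ i) G $ (n + K - k))"
      by (simp add: fps_mult_nth)
    also have "\<dots> = (\<Sum>k\<le>K. coeff (A i) k * (fps_deriv ^^ i) G $ (n + K - k))"
      by (rule sum.mono_neutral_right) (use deg[OF that] in \<open>auto simp: coeff_eq_0\<close>)
    also have "\<dots> = (\<Sum>k\<le>K. \<Sum>t\<le>K + r. summand i k t)"
    proof (rule sum.cong[OF refl])
      fix k assume "k \<in> {..K}"
      then have "n + K - k = n + (K - k)" "K - k + i \<in> {..K + r}" using that by auto
      then show "coeff (A i) k * (fps_deriv ^^ i) G $ (n + K - k) = (\<Sum>t\<le>K + r. summand i k t)"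
        by (simp add: summand_def fps_nth_deriv_iterate algebra_simps)
    qed
    finally show ?thesis .
  qed
  have "0 = (\<Sum>i\<le>r. fps_of_poly (A i) * (fps_deriv ^^ i) G) $ (n + K)"
    using eq by simp
  also have "\<dots> = (\<Sum>i\<le>r. (fps_of_poly (A i) * (fps_deriv ^^ i) G) $ (n + K))"
    by (rule fps_sum_nth)
  also have "\<dots> = (\<Sum>i\<le>r. \<Sum>k\<le>K. \<Sum>t\<le>K + r. summand i k t)"
    using nth by simp
  also have "\<dots> = (\<Sum>i\<le>r. \<Sum>t\<le>K + r. \<Sum>k\<le>K. summand i k t)"
    by (rule sum.cong[OF refl], rule sum.swap)
  also have "\<dots> = (\<Sum>t\<le>K + r. \<Sum>i\<le>r. \<Sum>k\<le>K. summand i k t)"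
    by (rule sum.swap)
  also have "\<dots> = (\<Sum>t\<le>K + r. poly (dfinite_recurrence_coeff A r K t) (of_nat n) * G $ (n + t))"
  proof (rule sum.cong[OF refl])
    fix t
    show "(\<Sum>i\<le>r. \<Sum>k\<le>K. summand i k t)
        = poly (dfinite_recurrence_coeff A r K t) (of_nat n) * G $ (n + t)"
      unfolding dfinite_recurrence_coeff_def poly_sum sum_distrib_right
      by (intro sum.cong refl) (simp add: summand_def poly_pochhammer_linear)
  qed
  finally show ?thesis by simp
qed

text \<open>Take the largest \<open>i\<close> with \<open>A\<^sub>i \<noteq> 0\<close> and the leading term \<open>k\<close> of \<open>A\<^sub>i\<close>: in
  \<open>dfinite_recurrence_coeff A r K (K - k + i)\<close> the coefficient of \<open>X\<^sup>i\<close> is exactly that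
  leading coefficient, since the other contributions have degree below \<open>i\<close> or vanish.\<close>
lemma dfinite_recurrence_coeff_nonzero:
  fixes A :: "nat \<Rightarrow> 'a::comm_ring_1 poly"
  assumes nz: "\<exists>i\<le>r. A i \<noteq> 0" and deg: "\<And>i. i \<le> r \<Longrightarrow> degree (A i) \<le> K"
  shows "\<exists>t\<le>K + r. dfinite_recurrence_coeff A r K t \<noteq> 0"
proof -
  define i0 where "i0 = Max {i. i \<le> r \<and> A i \<noteq> 0}"
  have fin: "finite {i. i \<le> r \<and> A i \<noteq> 0}" by simp
  have i0: "i0 \<le> r" "A i0 \<noteq> 0" using Max_in[OF fin] nz unfolding i0_def by auto
  have above_i0: "A i = 0" if "i0 < i" "i \<le> r" for i
    using Max_ge[OF fin, of i] that unfolding i0_def by fastforce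
  define k0 where "k0 = degree (A i0)"
  have k0: "k0 \<le> K" using deg i0 unfolding k0_def by auto
  define t0 where "t0 = K - k0 + i0"
  have contribution:
    "coeff (if t0 = K - k + i
        then smult (coeff (A i) k) (pochhammer [:of_nat (K - k) + 1, 1:] i) else 0) i0
     = (if i = i0 then if k = k0 then coeff (A i0) k0 else 0 else 0)" if "i \<le> r" "k \<le> K" for i k
  proof -
    consider "i0 < i" | "i < i0" | "i = i0" by linarith
    then show ?thesis
    proof cases
      case 1
      then show ?thesis using above_i0 that by auto
    next
      case 2
      then have "degree (pochhammer [:of_nat (K - k) + 1, 1::'a:] i) < i0"
        using conjunct1[OF pochhammer_linear_monic[of "of_nat (K - k) + 1 :: 'a" i]] by linarith
      then have "coeff (pochhammer [:of_nat (K - k) + 1, 1::'a:] i) i0 = 0"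
        by (rule coeff_eq_0)
      then show ?thesis using 2 by auto
    next
      case 3
      then show ?thesis
        using that k0 pochhammer_linear_monic[of "of_nat (K - k) + 1 :: 'a" i] by (auto simp: t0_def)
    qed
  qed
  have "coeff (dfinite_recurrence_coeff A r K t0) i0
      = (\<Sum>i\<le>r. \<Sum>k\<le>K. if i = i0 then if k = k0 then coeff (A i0) k0 else 0 else 0)"
    unfolding dfinite_recurrence_coeff_def coeff_sum
    by (intro sum.cong refl) (rule contribution; simp)
  also have "\<dots> = (\<Sum>i\<le>r. if i = i0 then coeff (A i0) k0 else 0)"
    using k0 by (intro sum.cong refl) (simp add: sum.delta)
  also have "\<dots> = coeff (A i0) k0" using i0 by (simp add: sum.delta)
  finally have "dfinite_recurrence_coeff A r K t0 \<noteq> 0"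
    using i0 by (auto simp: k0_def)
  moreover have "t0 \<le> K + r" using k0 i0 unfolding t0_def by linarith
  ultimately show ?thesis by blast
qed

lemma dfinite_imp_p_recursive:
  fixes G :: "'a::field_char_0 fps"
  assumes "dfinite G"
  shows "p_recursive (\<lambda>n. G $ n)"
proof -
  obtain r A where nz: "\<exists>i\<le>r. A i \<noteq> 0"
    and eq: "(\<Sum>i\<le>r. fps_of_poly (A i) * (fps_deriv ^^ i) G) = 0"
    using assms unfolding dfinite_def by blast
  define K where "K = (\<Sum>i\<le>r. degree (A i))"
  have deg: "degree (A i) \<le> K" if "i \<le> r" for i
    unfolding K_def using that by (intro member_le_sum) auto
  show ?thesis
    unfolding p_recursive_def
    using dfinite_recurrence[OF deg eq] dfinite_recurrence_coeff_nonzero[OF nz deg] by blast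
qed

definition algebraic_fps :: "'a::field fps \<Rightarrow> bool" where
  "algebraic_fps G \<longleftrightarrow> (\<exists>d Q. Q d \<noteq> 0 \<and> (\<Sum>l\<le>d. fps_of_poly (Q l) * G ^ l) = 0)"

text \<open>For a relation of minimal degree \<open>d\<close>, \<open>poly_span\<close> is the \<open>K[X]\<close>-span of
  \<open>1, G, \<dots>, G^(d-1)\<close> and \<open>frac_span\<close> the set of series that some nonzero polynomial multiplies into
  it, i.e. \<open>K(X)[G] \<inter> K[[X]]\<close>, a \<open>K(X)\<close>-space of dimension at most \<open>d\<close>.\<close>
locale minimal_algebraic_relation =
  fixes G :: "'a::field_char_0 fps" and d :: nat and Q :: "nat \<Rightarrow> 'a poly"
  assumes lead_nonzero: "Q d \<noteq> 0"
    and relation: "(\<Sum>l\<le>d. fps_of_poly (Q l) * G ^ l) = 0"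
    and minimal: "\<And>d' Q'. Q' d' \<noteq> 0 \<Longrightarrow> (\<Sum>l\<le>d'. fps_of_poly (Q' l) * G ^ l) = 0 \<Longrightarrow> d \<le> d'"
begin

lemma degree_pos: "d > 0"
proof (rule ccontr)
  assume "\<not> d > 0"
  then have "fps_of_poly (Q 0) = 0" "d = 0" using relation by simp_all
  then show False using lead_nonzero by (metis fps_of_poly_0 fps_of_poly_eq_iff)
qed

definition poly_span :: "'a fps set" where
  "poly_span = {x. \<exists>r. x = (\<Sum>l<d. fps_of_poly (r l) * G ^ l)}"

lemma poly_spanI: "x = (\<Sum>l<d. fps_of_poly (r l) * G ^ l) \<Longrightarrow> x \<in> poly_span"
  unfolding poly_span_def by blast

lemma poly_span_zero: "0 \<in> poly_span"
  by (rule poly_spanI[of _ "\<lambda>_. 0"]) simp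

lemma poly_span_add:
  assumes "x \<in> poly_span" "y \<in> poly_span"
  shows "x + y \<in> poly_span"
proof -
  obtain r s where "x = (\<Sum>l<d. fps_of_poly (r l) * G ^ l)" "y = (\<Sum>l<d. fps_of_poly (s l) * G ^ l)"
    using assms unfolding poly_span_def by blast
  then show ?thesis
    by (intro poly_spanI[of _ "\<lambda>l. r l + s l"]) (simp add: fps_of_poly_add sum.distrib distrib_right)
qed

lemma poly_span_poly_mult:
  assumes "x \<in> poly_span"
  shows "fps_of_poly p * x \<in> poly_span"
proof -
  obtain r where "x = (\<Sum>l<d. fps_of_poly (r l) * G ^ l)"
    using assms unfolding poly_span_def by blast
  then show ?thesis
    by (intro poly_spanI[of _ "\<lambda>l. p * r l"]) (simp add: fps_of_poly_mult sum_distrib_left mult.assoc)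
qed

lemma poly_span_sum: "(\<And>i. i \<in> S \<Longrightarrow> f i \<in> poly_span) \<Longrightarrow> sum f S \<in> poly_span"
  by (induction S rule: infinite_finite_induct) (auto intro: poly_span_add poly_span_zero)

lemma poly_span_poly: "fps_of_poly p \<in> poly_span"
proof -
  have "(\<Sum>l<d. fps_of_poly (if l = 0 then p else 0) * G ^ l)
      = (\<Sum>l<d. if l = 0 then fps_of_poly p * G ^ l else 0)"
    by (intro sum.cong) auto
  also have "\<dots> = fps_of_poly p" using degree_pos by (simp add: sum.delta)
  finally show ?thesis by (intro poly_spanI[of _ "\<lambda>l. if l = 0 then p else 0"]) simp
qed

lemma lead_mult_G_power_in_poly_span: "fps_of_poly (Q d) * G ^ d \<in> poly_span"
proof -
  have "(\<Sum>l\<le>d. fps_of_poly (Q l) * G ^ l)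
      = (\<Sum>l<d. fps_of_poly (Q l) * G ^ l) + fps_of_poly (Q d) * G ^ d"
    by (simp add: lessThan_Suc_atMost[symmetric])
  then have "fps_of_poly (Q d) * G ^ d = (\<Sum>l<d. fps_of_poly (- Q l) * G ^ l)"
    using relation by (simp add: fps_of_poly_uminus sum_negf eq_neg_iff_add_eq_0 add.commute)
  then show ?thesis by (rule poly_spanI)
qed

lemma poly_span_mult_G:
  assumes "x \<in> poly_span"
  shows "fps_of_poly (Q d) * (G * x) \<in> poly_span"
proof -
  obtain r where x: "x = (\<Sum>l<d. fps_of_poly (r l) * G ^ l)"
    using assms unfolding poly_span_def by blast
  obtain e where e: "d = Suc e" using degree_pos by (cases d) auto
  have "G * x = (\<Sum>l<e. fps_of_poly (r l) * G ^ Suc l) + fps_of_poly (r e) * G ^ d"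
    unfolding x e by (simp add: sum_distrib_left algebra_simps)
  then have split: "fps_of_poly (Q d) * (G * x)
      = (\<Sum>l<e. fps_of_poly (Q d * r l) * G ^ Suc l) + fps_of_poly (r e) * (fps_of_poly (Q d) * G ^ d)"
    by (simp add: distrib_left sum_distrib_left fps_of_poly_mult algebra_simps)
  have "(\<Sum>l<e. fps_of_poly (Q d * r l) * G ^ Suc l)
      = (\<Sum>l<d. fps_of_poly (if l = 0 then 0 else Q d * r (l - 1)) * G ^ l)"
    unfolding e sum.lessThan_Suc_shift by simp
  then have "(\<Sum>l<e. fps_of_poly (Q d * r l) * G ^ Suc l) \<in> poly_span" by (rule poly_spanI)
  then show ?thesis
    unfolding split by (intro poly_span_add poly_span_poly_mult lead_mult_G_power_in_poly_span)
qed

lemma poly_span_mult_G_power: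
  assumes "x \<in> poly_span"
  shows "fps_of_poly (Q d ^ l) * (G ^ l * x) \<in> poly_span"
proof (induction l)
  case (Suc l)
  have "fps_of_poly (Q d ^ Suc l) * (G ^ Suc l * x)
      = fps_of_poly (Q d) * (G * (fps_of_poly (Q d ^ l) * (G ^ l * x)))"
    by (simp add: fps_of_poly_mult fps_of_poly_power algebra_simps)
  then show ?case by (simp only: poly_span_mult_G[OF Suc.IH])
qed (simp add: assms)

lemma poly_span_mult:
  assumes "x \<in> poly_span" "y \<in> poly_span"
  shows "fps_of_poly (Q d ^ d) * (x * y) \<in> poly_span"
proof -
  obtain r where x: "x = (\<Sum>l<d. fps_of_poly (r l) * G ^ l)"
    using assms(1) unfolding poly_span_def by blast
  have "fps_of_poly (Q d ^ d) * (x * y)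
      = (\<Sum>l<d. fps_of_poly (r l * Q d ^ (d - l)) * (fps_of_poly (Q d ^ l) * (G ^ l * y)))"
    unfolding x sum_distrib_left sum_distrib_right
  proof (rule sum.cong[OF refl])
    fix l assume "l \<in> {..<d}"
    then have "Q d ^ d = Q d ^ (d - l) * Q d ^ l" by (simp add: power_add[symmetric])
    then show "fps_of_poly (Q d ^ d) * (fps_of_poly (r l) * G ^ l * y)
        = fps_of_poly (r l * Q d ^ (d - l)) * (fps_of_poly (Q d ^ l) * (G ^ l * y))"
      by (simp add: fps_of_poly_mult algebra_simps)
  qed
  also have "\<dots> \<in> poly_span"
    by (intro poly_span_sum poly_span_poly_mult poly_span_mult_G_power assms(2))
  finally show ?thesis .
qed

definition frac_span :: "'a fps set" where
  "frac_span = {x. \<exists>c. c \<noteq> 0 \<and> fps_of_poly c * x \<in> poly_span}"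

lemma poly_span_frac_span: "x \<in> poly_span \<Longrightarrow> x \<in> frac_span"
  unfolding frac_span_def by (rule CollectI, rule exI[of _ 1]) simp

lemma frac_span_cancel:
  assumes "c \<noteq> 0" "fps_of_poly c * x \<in> frac_span"
  shows "x \<in> frac_span"
proof -
  obtain c' where "c' \<noteq> 0" "fps_of_poly c' * (fps_of_poly c * x) \<in> poly_span"
    using assms(2) unfolding frac_span_def by blast
  then show ?thesis
    using assms(1) unfolding frac_span_def
    by (intro CollectI exI[of _ "c' * c"]) (simp add: fps_of_poly_mult mult.assoc)
qed

lemma frac_span_add:
  assumes "x \<in> frac_span" "y \<in> frac_span"
  shows "x + y \<in> frac_span"
proof -
  obtain c1 c2 where c: "c1 \<noteq> 0" "c2 \<noteq> 0"
    and in_span: "fps_of_poly c1 * x \<in> poly_span" "fps_of_poly c2 * y \<in> poly_span"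
    using assms unfolding frac_span_def by blast
  have "fps_of_poly (c1 * c2) * (x + y)
      = fps_of_poly c2 * (fps_of_poly c1 * x) + fps_of_poly c1 * (fps_of_poly c2 * y)"
    by (simp add: fps_of_poly_mult algebra_simps)
  also have "\<dots> \<in> poly_span" by (intro poly_span_add poly_span_poly_mult in_span)
  finally show ?thesis using c unfolding frac_span_def by (intro CollectI exI[of _ "c1 * c2"]) simp
qed

lemma frac_span_mult:
  assumes "x \<in> frac_span" "y \<in> frac_span"
  shows "x * y \<in> frac_span"
proof -
  obtain c1 c2 where c: "c1 \<noteq> 0" "c2 \<noteq> 0"
    and in_span: "fps_of_poly c1 * x \<in> poly_span" "fps_of_poly c2 * y \<in> poly_span"
    using assms unfolding frac_span_def by blast
  have "fps_of_poly (Q d ^ d * c1 * c2) * (x * y)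
      = fps_of_poly (Q d ^ d) * ((fps_of_poly c1 * x) * (fps_of_poly c2 * y))"
    by (simp add: fps_of_poly_mult algebra_simps)
  also have "\<dots> \<in> poly_span" by (rule poly_span_mult[OF in_span])
  finally show ?thesis
    using c lead_nonzero unfolding frac_span_def by (intro CollectI exI[of _ "Q d ^ d * c1 * c2"]) simp
qed

lemma frac_span_poly: "fps_of_poly p \<in> frac_span"
  by (intro poly_span_frac_span poly_span_poly)

lemma frac_span_of_nat: "of_nat n \<in> frac_span"
  using frac_span_poly[of "[:of_nat n:]"] by (simp add: fps_of_poly_const fps_of_nat)

lemma frac_span_diff:
  assumes "x \<in> frac_span" "y \<in> frac_span"
  shows "x - y \<in> frac_span"
proof -
  have "x + fps_of_poly (-1) * y \<in> frac_span"
    by (intro frac_span_add frac_span_mult frac_span_poly assms)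
  then show ?thesis by (simp add: fps_of_poly_uminus)
qed

lemma frac_span_sum: "(\<And>i. i \<in> S \<Longrightarrow> f i \<in> frac_span) \<Longrightarrow> sum f S \<in> frac_span"
  by (induction S rule: infinite_finite_induct)
    (auto intro: frac_span_add poly_span_frac_span poly_span_zero)

lemma frac_span_power: "x \<in> frac_span \<Longrightarrow> x ^ n \<in> frac_span"
  by (induction n) (auto intro: frac_span_mult simp: frac_span_poly[of 1, simplified])

lemma G_in_frac_span: "G \<in> frac_span"
proof -
  have "fps_of_poly (Q d) * (G * fps_of_poly 1) \<in> poly_span"
    by (intro poly_span_mult_G poly_span_poly)
  then show ?thesis unfolding frac_span_def using lead_nonzero by auto
qed

text \<open>\<open>\<partial>Q/\<partial>Y\<close> evaluated at \<open>Y = G\<close>; it has degree \<open>d - 1\<close> in \<open>Y\<close>, so by minimality of \<open>d\<close>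
  it cannot vanish.\<close>
definition separant :: "'a fps" where
  "separant = (\<Sum>l<d. fps_of_poly (smult (of_nat (Suc l)) (Q (Suc l))) * G ^ l)"

lemma separant_nonzero: "separant \<noteq> 0"
proof
  assume "separant = 0"
  define Q' where "Q' l = smult (of_nat (Suc l)) (Q (Suc l))" for l
  have "{..d - 1} = {..<d}" using degree_pos by auto
  with \<open>separant = 0\<close> have "(\<Sum>l\<le>d - 1. fps_of_poly (Q' l) * G ^ l) = 0"
    unfolding separant_def Q'_def by simp
  moreover have "Q' (d - 1) \<noteq> 0" using lead_nonzero degree_pos by (simp add: Q'_def)
  ultimately have "d \<le> d - 1" using minimal by blast
  then show False using degree_pos by simp
qed

lemma separant_in_frac_span: "separant \<in> frac_span"
  unfolding separant_def by (intro frac_span_sum frac_span_mult frac_span_poly frac_span_power G_in_frac_span)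

lemma separant_mult_deriv_G: "separant * fps_deriv G = - (\<Sum>l\<le>d. fps_of_poly (pderiv (Q l)) * G ^ l)"
proof -
  obtain e where e: "d = Suc e" using degree_pos by (cases d) auto
  have "(\<Sum>l\<le>d. fps_of_poly (Q l) * (of_nat l * fps_deriv G * G ^ (l - 1)))
      = (\<Sum>l\<le>e. fps_of_poly (Q (Suc l)) * (of_nat (Suc l) * fps_deriv G * G ^ l))"
    unfolding e sum.atMost_Suc_shift by simp
  also have "\<dots> = (\<Sum>l<d. fps_of_poly (smult (of_nat (Suc l)) (Q (Suc l))) * G ^ l) * fps_deriv G"
    unfolding e sum_distrib_right lessThan_Suc_atMost
    by (intro sum.cong refl) (simp add: fps_of_poly_smult fps_of_nat[symmetric] algebra_simps)
  also have "\<dots> = separant * fps_deriv G" by (simp add: separant_def)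
  finally have chain: "(\<Sum>l\<le>d. fps_of_poly (Q l) * (of_nat l * fps_deriv G * G ^ (l - 1)))
      = separant * fps_deriv G" .
  have "0 = fps_deriv (\<Sum>l\<le>d. fps_of_poly (Q l) * G ^ l)" using relation by simp
  also have "\<dots> = (\<Sum>l\<le>d. fps_of_poly (pderiv (Q l)) * G ^ l) + separant * fps_deriv G"
    unfolding chain[symmetric]
    by (simp add: fps_deriv_sum fps_of_poly_pderiv fps_deriv_power' sum.distrib)
  finally show ?thesis by (simp add: eq_neg_iff_add_eq_0 add.commute)
qed

lemma separant_mult_deriv_in_frac_span:
  assumes "x \<in> frac_span"
  shows "separant * fps_deriv x \<in> frac_span"
proof -
  obtain c r where c: "c \<noteq> 0" and x: "fps_of_poly c * x = (\<Sum>l<d. fps_of_poly (r l) * G ^ l)"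
    using assms unfolding frac_span_def poly_span_def by blast
  have "separant * fps_deriv G \<in> frac_span"
    unfolding separant_mult_deriv_G diff_0[symmetric]
    by (intro frac_span_diff poly_span_frac_span poly_span_zero frac_span_sum frac_span_mult
        frac_span_poly frac_span_power G_in_frac_span)
  then have "separant * fps_deriv (fps_of_poly c * x) \<in> frac_span"
  proof -
    have "separant * fps_deriv (fps_of_poly c * x)
        = (\<Sum>l<d. separant * fps_of_poly (pderiv (r l)) * G ^ l
            + fps_of_poly (r l) * of_nat l * G ^ (l - 1) * (separant * fps_deriv G))"
      unfolding x
      by (simp add: fps_deriv_sum fps_of_poly_pderiv fps_deriv_power' sum_distrib_left algebra_simps)
    also have "\<dots> \<in> frac_span"
      by (intro frac_span_sum frac_span_add frac_span_mult frac_span_poly frac_span_power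
          G_in_frac_span separant_in_frac_span frac_span_of_nat \<open>separant * fps_deriv G \<in> frac_span\<close>)
    finally show ?thesis .
  qed
  moreover have "fps_of_poly c * (separant * fps_deriv x)
      = separant * fps_deriv (fps_of_poly c * x) - fps_of_poly (pderiv c) * (separant * x)"
    by (simp add: fps_of_poly_pderiv algebra_simps)
  ultimately have "fps_of_poly c * (separant * fps_deriv x) \<in> frac_span"
    by (simp add: frac_span_diff frac_span_mult frac_span_poly separant_in_frac_span assms)
  then show ?thesis using frac_span_cancel[OF c] by blast
qed

text \<open>Writing \<open>z = S^(2i) G^(i)\<close> for the separant \<open>S\<close>, one has
  \<open>S^(2i+2) G^(i+1) = S (S z') - 2i (S S') z\<close>.\<close>
lemma separant_power_mult_deriv_iterate:
  "separant ^ (2 * i) * (fps_deriv ^^ i) G \<in> frac_span"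
proof (induction i)
  case 0
  then show ?case using G_in_frac_span by simp
next
  case (Suc i)
  define z where "z = separant ^ (2 * i) * (fps_deriv ^^ i) G"
  define D where "D = (fps_deriv ^^ i) G"
  have "separant ^ (2 * Suc i) * (fps_deriv ^^ Suc i) G
      = separant * (separant * fps_deriv z) - of_nat (2 * i) * (separant * fps_deriv separant) * z"
  proof (cases i)
    case 0
    then show ?thesis by (simp add: z_def power2_eq_square)
  next
    case (Suc i')
    then have power: "separant * separant ^ (2 * i - 1) = separant ^ (2 * i)"
      by (metis power_Suc Suc_diff_1 zero_less_Suc mult_pos_pos zero_less_numeral)
    have z': "fps_deriv z = of_nat (2 * i) * fps_deriv separant * separant ^ (2 * i - 1) * D
        + separant ^ (2 * i) * fps_deriv D"
      by (simp add: z_def D_def fps_deriv_power')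
    have "separant * (separant * fps_deriv z)
        = of_nat (2 * i) * (separant * fps_deriv separant) * (separant * separant ^ (2 * i - 1)) * D
          + separant * separant * separant ^ (2 * i) * fps_deriv D"
      unfolding z' distrib_left by (simp only: mult_ac)
    also have "\<dots> = of_nat (2 * i) * (separant * fps_deriv separant) * z
        + separant * separant * separant ^ (2 * i) * fps_deriv D"
      unfolding power z_def D_def by (simp only: mult_ac)
    finally show ?thesis by (simp add: D_def)
  qed
  moreover have "z \<in> frac_span" using Suc z_def by simp
  ultimately show ?case
    by (simp only:) (intro frac_span_diff frac_span_mult separant_in_frac_span
        separant_mult_deriv_in_frac_span frac_span_of_nat)
qed

lemma frac_span_linearly_dependent:
  assumes "\<And>i. i \<le> d \<Longrightarrow> y i \<in> frac_span"
  shows "\<exists>A. (\<exists>i\<le>d. A i \<noteq> 0) \<and> (\<Sum>i\<le>d. fps_of_poly (A i) * y i) = 0"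
proof -
  have "\<forall>i. \<exists>c. i \<le> d \<longrightarrow> c \<noteq> 0 \<and> fps_of_poly c * y i \<in> poly_span"
    using assms unfolding frac_span_def by blast
  from choice[OF this] obtain c
    where c: "\<forall>i. i \<le> d \<longrightarrow> c i \<noteq> 0 \<and> fps_of_poly (c i) * y i \<in> poly_span" ..
  then have "\<forall>i. \<exists>r. i \<le> d \<longrightarrow> fps_of_poly (c i) * y i = (\<Sum>l<d. fps_of_poly (r l) * G ^ l)"
    unfolding poly_span_def by blast
  from choice[OF this] obtain r
    where r: "\<forall>i. i \<le> d \<longrightarrow> fps_of_poly (c i) * y i = (\<Sum>l<d. fps_of_poly (r i l) * G ^ l)" ..
  obtain lam where lam: "\<exists>i\<le>d. lam i \<noteq> 0" "\<And>l. l < d \<Longrightarrow> (\<Sum>i\<le>d. lam i * r i l) = 0"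
    using poly_vectors_linearly_dependent[of d r] by blast
  define A where "A i = lam i * c i" for i
  have "(\<Sum>i\<le>d. fps_of_poly (A i) * y i) = (\<Sum>i\<le>d. \<Sum>l<d. fps_of_poly (lam i * r i l) * G ^ l)"
  proof (intro sum.cong refl)
    fix i assume "i \<in> {..d}"
    then show "fps_of_poly (A i) * y i = (\<Sum>l<d. fps_of_poly (lam i * r i l) * G ^ l)"
      using r by (simp add: A_def sum_distrib_left fps_of_poly_mult mult.assoc)
  qed
  also have "\<dots> = (\<Sum>l<d. \<Sum>i\<le>d. fps_of_poly (lam i * r i l) * G ^ l)"
    by (rule sum.swap)
  also have "\<dots> = (\<Sum>l<d. fps_of_poly (\<Sum>i\<le>d. lam i * r i l) * G ^ l)"
    unfolding fps_of_poly_sum sum_distrib_right ..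
  also have "\<dots> = 0" using lam(2) by (intro sum.neutral) simp
  finally have "(\<Sum>i\<le>d. fps_of_poly (A i) * y i) = 0" .
  moreover have "\<exists>i\<le>d. A i \<noteq> 0" using lam(1) c by (auto simp: A_def)
  ultimately show ?thesis by blast
qed

text \<open>The \<open>d + 1\<close> series \<open>S^(2d) G^(i)\<close> with \<open>i \<le> d\<close> lie in \<open>frac_span\<close>; cancelling the
  separant in their linear dependence gives a differential equation for \<open>G\<close>.\<close>
lemma dfinite: "dfinite G"
proof -
  have "separant ^ (2 * d) * (fps_deriv ^^ i) G \<in> frac_span" if "i \<le> d" for i
  proof -
    have "2 * (d - i) + 2 * i = 2 * d" using that by simp
    then have "separant ^ (2 * d) * (fps_deriv ^^ i) G
        = separant ^ (2 * (d - i)) * (separant ^ (2 * i) * (fps_deriv ^^ i) G)"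
      by (metis power_add mult.assoc)
    then show ?thesis
      by (simp only:) (intro frac_span_mult frac_span_power separant_in_frac_span
          separant_power_mult_deriv_iterate)
  qed
  then obtain A where nonzero: "\<exists>i\<le>d. A i \<noteq> 0"
    and dependent: "(\<Sum>i\<le>d. fps_of_poly (A i) * (separant ^ (2 * d) * (fps_deriv ^^ i) G)) = 0"
    using frac_span_linearly_dependent[of "\<lambda>i. separant ^ (2 * d) * (fps_deriv ^^ i) G"] by blast
  have "separant ^ (2 * d) * (\<Sum>i\<le>d. fps_of_poly (A i) * (fps_deriv ^^ i) G) = 0"
    using dependent by (simp add: sum_distrib_left mult.left_commute)
  then have "(\<Sum>i\<le>d. fps_of_poly (A i) * (fps_deriv ^^ i) G) = 0"
    using separant_nonzero by simp
  with nonzero show ?thesis unfolding dfinite_def by blast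
qed

end

lemma algebraic_imp_dfinite:
  fixes G :: "'a::field_char_0 fps"
  assumes "algebraic_fps G"
  shows "dfinite G"
proof -
  define P where "P d \<longleftrightarrow> (\<exists>Q. Q d \<noteq> 0 \<and> (\<Sum>l\<le>d. fps_of_poly (Q l) * G ^ l) = 0)" for d
  obtain d0 where "P d0" using assms unfolding algebraic_fps_def P_def by blast
  define d where "d = (LEAST d. P d)"
  have "P d" unfolding d_def by (rule LeastI) fact
  then obtain Q where Q: "Q d \<noteq> 0" "(\<Sum>l\<le>d. fps_of_poly (Q l) * G ^ l) = 0"
    unfolding P_def by blast
  have "d \<le> d'" if "Q' d' \<noteq> 0" "(\<Sum>l\<le>d'. fps_of_poly (Q' l) * G ^ l) = 0" for d' Q'
    unfolding d_def by (rule Least_le) (use that in \<open>auto simp: P_def\<close>)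
  with Q have "minimal_algebraic_relation G d Q"
    unfolding minimal_algebraic_relation_def by blast
  then show ?thesis by (rule minimal_algebraic_relation.dfinite)
qed

lemma eventually_periodic_shift_iff:
  "eventually_periodic (\<lambda>n. s (n + k)) \<longleftrightarrow> eventually_periodic s"
proof
  assume "eventually_periodic (\<lambda>n. s (n + k))"
  then obtain N d where d: "d \<ge> 1" "\<And>n. n \<ge> N \<Longrightarrow> s (n + d + k) = s (n + k)"
    unfolding eventually_periodic_def by auto
  have "s (n + d) = s n" if "n \<ge> N + k" for n
    using d(2)[of "n - k"] that by (simp add: algebra_simps)
  with d(1) show "eventually_periodic s" unfolding eventually_periodic_def by blast
next
  assume "eventually_periodic s"
  then obtain N d where d: "d \<ge> 1" "\<And>n. n \<ge> N \<Longrightarrow> s (n + d) = s n"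
    unfolding eventually_periodic_def by auto
  have "s (n + d + k) = s (n + k)" if "n \<ge> N" for n
    using d(2)[of "n + k"] that by (simp add: algebra_simps)
  with d(1) show "eventually_periodic (\<lambda>n. s (n + k))" unfolding eventually_periodic_def by blast
qed

lemma eventually_periodic_comp_inj_iff:
  assumes "inj f"
  shows "eventually_periodic (f \<circ> s) \<longleftrightarrow> eventually_periodic s"
  unfolding eventually_periodic_def comp_def by (simp add: inj_eq[OF assms])

lemma eventually_periodic_of_nat_iff:
  "eventually_periodic (\<lambda>n. of_nat (s n) :: 'a::semiring_char_0) \<longleftrightarrow> eventually_periodic s"
  using eventually_periodic_comp_inj_iff[of "of_nat :: nat \<Rightarrow> 'a" s] inj_of_nat
  by (simp add: comp_def)

text \<open>If membership in \<open>S\<close> has period \<open>d\<close> beyond \<open>N\<close>, then \<open>x \<mapsto> x + d\<close> maps the elements of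
  \<open>S\<close> beyond \<open>N\<close> order-preservingly onto those beyond \<open>N + d\<close>, so it shifts their indices by a
  constant \<open>m\<close>.\<close>
lemma enumerate_add_period:
  fixes S :: "nat set"
  assumes inf: "infinite S" and d: "d \<ge> 1"
    and per: "\<And>i. i \<ge> N \<Longrightarrow> i + d \<in> S \<longleftrightarrow> i \<in> S"
  shows "\<exists>m\<ge>1. \<forall>k\<ge>N. enumerate S (k + m) = enumerate S k + d"
proof -
  define p where "p = enumerate S"
  have pS: "p k \<in> S" for k unfolding p_def using enumerate_in_set[OF inf] .
  have p_less: "p k < p l \<longleftrightarrow> k < l" for k l unfolding p_def using inf by simp
  have p_onto: "x \<in> S \<Longrightarrow> \<exists>l. p l = x" for x unfolding p_def using enumerate_Ex[OF inf] by blast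
  have p_ge: "k \<le> p k" for k unfolding p_def using le_enumerate[OF inf] .
  define psi where "psi k = (SOME j. p j = p k + d)" for k
  have psi: "p (psi k) = p k + d" if "k \<ge> N" for k
  proof -
    have "p k + d \<in> S" using per pS p_ge[of k] that by simp
    then obtain j where "p j = p k + d" using p_onto by blast
    then show ?thesis unfolding psi_def by (rule someI)
  qed
  have psi_Suc: "psi (Suc k) = Suc (psi k)" if "k \<ge> N" for k
  proof (rule ccontr)
    assume ne: "psi (Suc k) \<noteq> Suc (psi k)"
    have "p (psi k) < p (psi (Suc k))" using psi[of k] psi[of "Suc k"] that p_less[of k "Suc k"] by simp
    then have "psi k < psi (Suc k)" using p_less by blast
    with ne have lt: "Suc (psi k) < psi (Suc k)" by linarith
    define j where "j = Suc (psi k)"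
    have "p k + d < p j" using psi[OF that] p_less[of "psi k" j] by (simp add: j_def)
    moreover have "p j < p (Suc k) + d"
      using psi[of "Suc k"] that p_less[of j "psi (Suc k)"] lt by (simp add: j_def)
    ultimately have j: "p k + d < p j" "p j < p (Suc k) + d" .
    then have "p j - d \<ge> N" "p j - d + d \<in> S" using pS[of j] p_ge[of k] that by auto
    then obtain l where "p l = p j - d" using per p_onto by blast
    with j have "p k < p l" "p l < p (Suc k)" by linarith+
    then show False using p_less[of k l] p_less[of l "Suc k"] by simp
  qed
  have psi_N: "psi (N + t) = psi N + t" for t
    by (induction t) (auto simp: psi_Suc)
  have "N < psi N" using psi[of N] d p_less[of N "psi N"] by simp
  show ?thesis
  proof (intro exI[of _ "psi N - N"] conjI allI impI)
    fix k assume "k \<ge> N"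
    then have "psi k = k + (psi N - N)" using psi_N[of "k - N"] \<open>N < psi N\<close> by simp
    then show "enumerate S (k + (psi N - N)) = enumerate S k + d"
      using psi[OF \<open>k \<ge> N\<close>] by (simp add: p_def)
  qed (use \<open>N < psi N\<close> in simp)
qed

lemma eventually_periodic_mem_if_gaps:
  fixes S :: "nat set"
  assumes inf: "infinite S" and m: "m \<ge> 1"
    and per: "\<And>k. k \<ge> K \<Longrightarrow>
      enumerate S (Suc (k + m)) - enumerate S (k + m) = enumerate S (Suc k) - enumerate S k"
  shows "eventually_periodic (\<lambda>i. i \<in> S)"
proof -
  define p where "p = enumerate S"
  have pS: "p k \<in> S" for k unfolding p_def using enumerate_in_set[OF inf] .
  have p_le: "p k \<le> p l \<longleftrightarrow> k \<le> l" for k l unfolding p_def using inf by simp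
  have p_onto: "x \<in> S \<Longrightarrow> \<exists>l. p l = x" for x unfolding p_def using enumerate_Ex[OF inf] by blast
  define T where "T = p (K + m) - p K"
  have shift: "p (k + m) = p k + T" if "k \<ge> K" for k
    using that
  proof (induction k rule: dec_induct)
    case base
    then show ?case using p_le[of K "K + m"] by (simp add: T_def)
  next
    case (step k)
    have "p k \<le> p (Suc k)" "p (k + m) \<le> p (Suc (k + m))" using p_le by auto
    moreover have "p (Suc (k + m)) - p (k + m) = p (Suc k) - p k"
      using per[OF step.hyps(1)] by (simp add: p_def)
    ultimately show ?case using step.IH by simp
  qed
  have "\<not> p (K + m) \<le> p K" using p_le[of "K + m" K] m by simp
  then have "T \<ge> 1" by (simp add: T_def)
  moreover have "i + T \<in> S \<longleftrightarrow> i \<in> S" if "p K \<le> i" for i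
  proof
    assume "i \<in> S"
    then obtain k where "p k = i" using p_onto by blast
    moreover have "k \<ge> K" using that p_le[of K k] calculation by simp
    ultimately show "i + T \<in> S" using shift pS by metis
  next
    assume "i + T \<in> S"
    then obtain j where j: "p j = i + T" using p_onto by blast
    have "p (K + m) \<le> p j" using shift[of K] that j by simp
    then have "K + m \<le> j" using p_le by blast
    then have "p (j - m) = i" using shift[of "j - m"] j by simp
    then show "i \<in> S" using pS by metis
  qed
  ultimately show ?thesis unfolding eventually_periodic_def by blast
qed

lemma eventually_periodic_mem_iff_gaps:
  fixes S :: "nat set"
  assumes inf: "infinite S"
  shows "eventually_periodic (\<lambda>i. i \<in> S)
     \<longleftrightarrow> eventually_periodic (\<lambda>k. enumerate S (Suc k) - enumerate S k)"
proof
  assume "eventually_periodic (\<lambda>i. i \<in> S)"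
  then obtain N d where d: "d \<ge> 1" "\<And>i. i \<ge> N \<Longrightarrow> i + d \<in> S \<longleftrightarrow> i \<in> S"
    unfolding eventually_periodic_def by blast
  obtain m where "m \<ge> 1" and m: "\<forall>k\<ge>N. enumerate S (k + m) = enumerate S k + d"
    using enumerate_add_period[OF inf d] by blast
  have "\<forall>k\<ge>N. enumerate S (Suc (k + m)) - enumerate S (k + m) = enumerate S (Suc k) - enumerate S k"
    using m[rule_format, of "Suc _"] m by simp
  with \<open>m \<ge> 1\<close> show "eventually_periodic (\<lambda>k. enumerate S (Suc k) - enumerate S k)"
    unfolding eventually_periodic_def by blast
next
  assume "eventually_periodic (\<lambda>k. enumerate S (Suc k) - enumerate S k)"
  then obtain K m where "m \<ge> 1"
    "\<And>k. k \<ge> K \<Longrightarrow> enumerate S (Suc (k + m)) - enumerate S (k + m) = enumerate S (Suc k) - enumerate S k"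
    unfolding eventually_periodic_def by auto
  then show "eventually_periodic (\<lambda>i. i \<in> S)" by (rule eventually_periodic_mem_if_gaps[OF inf])
qed

lemma ratpoly_fps_nth: "ratpoly_fps q $ n = of_rat (coeff q n)"
  by (simp add: ratpoly_fps_def coeff_map_poly)

lemma ratpoly_fps_mult: "ratpoly_fps (p * q) = ratpoly_fps p * ratpoly_fps q"
  by (rule fps_ext) (simp add: ratpoly_fps_nth fps_mult_nth coeff_mult atLeast0AtMost of_rat_mult
      of_rat_sum)

lemma in_rat_fun_field_cancel:
  assumes "C \<noteq> 0" "in_rat_fun_field (ratpoly_fps C * F)"
  shows "in_rat_fun_field F"
proof -
  obtain A B where "B \<noteq> 0" "ratpoly_fps B * (ratpoly_fps C * F) = ratpoly_fps A"
    using assms(2) unfolding in_rat_fun_field_def by blast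
  then have "B * C \<noteq> 0" "ratpoly_fps (B * C) * F = ratpoly_fps A"
    using assms(1) by (simp_all add: ratpoly_fps_mult mult.assoc)
  then show ?thesis unfolding in_rat_fun_field_def by blast
qed

text \<open>With period \<open>m\<close>, multiplying by \<open>1 - X^m\<close> leaves only finitely many nonzero coefficients.\<close>
lemma eventually_periodic_imp_in_rat_fun_field:
  fixes g :: "nat \<Rightarrow> rat"
  assumes "eventually_periodic g"
  shows "in_rat_fun_field (Abs_fps (\<lambda>n. of_rat (g n)))"
proof -
  obtain N m where m: "m \<ge> 1" "\<And>n. n \<ge> N \<Longrightarrow> g (n + m) = g n"
    using assms unfolding eventually_periodic_def by blast
  define h where "h n = g n - (if n < m then 0 else g (n - m))" for n
  have h_vanishes: "h n = 0" if "n \<ge> N + m" for n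
    using m(2)[of "n - m"] that by (simp add: h_def)
  define A where "A = (\<Sum>n<N + m. monom (h n) n)"
  define B :: "rat poly" where "B = 1 - monom 1 m"
  have "coeff B 0 = 1" using m(1) by (simp add: B_def coeff_monom)
  then have "B \<noteq> 0" by auto
  moreover have "ratpoly_fps B * Abs_fps (\<lambda>n. of_rat (g n)) = ratpoly_fps A"
  proof (rule fps_ext)
    fix n
    have "ratpoly_fps B = 1 - fps_X ^ m"
      by (rule fps_ext) (simp add: ratpoly_fps_nth B_def coeff_monom fps_X_power_nth of_rat_diff)
    then have "(ratpoly_fps B * Abs_fps (\<lambda>n. of_rat (g n))) $ n = of_rat (h n)"
      by (simp add: left_diff_distrib fps_X_power_mult_nth h_def of_rat_diff)
    also have "\<dots> = ratpoly_fps A $ n"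
      using h_vanishes[of n] by (simp add: ratpoly_fps_nth A_def coeff_sum coeff_monom)
    finally show "(ratpoly_fps B * Abs_fps (\<lambda>n. of_rat (g n))) $ n = ratpoly_fps A $ n" .
  qed
  ultimately show ?thesis unfolding in_rat_fun_field_def by blast
qed

lemma not_transcendental_imp_algebraic:
  assumes "\<not> transcendental_rat_fun F"
  shows "algebraic_fps F"
proof -
  obtain Q :: "rat poly poly" where "Q \<noteq> 0" and root: "poly (map_poly ratpoly_fps Q) F = 0"
    using assms unfolding transcendental_rat_fun_def by blast
  define Qc where "Qc l = map_poly (of_rat :: rat \<Rightarrow> complex) (coeff Q l)" for l
  have "ratpoly_fps q = 0 \<longleftrightarrow> q = 0" for q
    by (metis fps_of_poly_eq_iff fps_of_poly_0 map_poly_0 map_poly_eq_0_iff of_rat_eq_0_iff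
        ratpoly_fps_def)
  then have "degree (map_poly ratpoly_fps Q) = degree Q"
    by (intro degree_map_poly) simp
  then have "(\<Sum>l\<le>degree Q. fps_of_poly (Qc l) * F ^ l) = 0"
    using root unfolding poly_altdef by (simp add: coeff_map_poly Qc_def ratpoly_fps_def)
  moreover have "Qc (degree Q) \<noteq> 0"
    using \<open>Q \<noteq> 0\<close> by (simp add: Qc_def map_poly_eq_0_iff)
  ultimately show ?thesis unfolding algebraic_fps_def by blast
qed

lemma algebraic_fps_poly_mult:
  fixes F :: "'a::field fps"
  assumes "algebraic_fps F" "c \<noteq> 0"
  shows "algebraic_fps (fps_of_poly c * F)"
proof -
  obtain d Q where "Q d \<noteq> 0" and rel: "(\<Sum>l\<le>d. fps_of_poly (Q l) * F ^ l) = 0"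
    using assms(1) unfolding algebraic_fps_def by blast
  define Q' where "Q' l = Q l * c ^ (d - l)" for l
  have "(\<Sum>l\<le>d. fps_of_poly (Q' l) * (fps_of_poly c * F) ^ l)
      = fps_of_poly (c ^ d) * (\<Sum>l\<le>d. fps_of_poly (Q l) * F ^ l)"
    unfolding sum_distrib_left
  proof (intro sum.cong refl)
    fix l assume "l \<in> {..d}"
    then have "c ^ d = c ^ (d - l) * c ^ l" by (simp flip: power_add)
    then show "fps_of_poly (Q' l) * (fps_of_poly c * F) ^ l = fps_of_poly (c ^ d) * (fps_of_poly (Q l) * F ^ l)"
      by (simp add: Q'_def fps_of_poly_mult fps_of_poly_power power_mult_distrib mult_ac)
  qed
  also have "\<dots> = 0" by (simp add: rel)
  finally have "(\<Sum>l\<le>d. fps_of_poly (Q' l) * (fps_of_poly c * F) ^ l) = 0" .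
  moreover have "Q' d \<noteq> 0" using \<open>Q d \<noteq> 0\<close> assms(2) by (simp add: Q'_def)
  ultimately show ?thesis unfolding algebraic_fps_def by blast
qed

lemma algebraic_finite_range_imp_eventually_periodic:
  fixes G :: "'a::field_char_0 fps"
  assumes "algebraic_fps G" "finite (range (\<lambda>n. G $ n))"
  shows "eventually_periodic (\<lambda>n. G $ n)"
  using assms by (intro p_recursive_imp_eventually_periodic dfinite_imp_p_recursive
      algebraic_imp_dfinite)

text \<open>The coefficients of \<open>(1 - X) P_a\<close>: \<open>p(1)\<close> at \<open>n = 1\<close> and the gaps \<open>p(n) - p(n-1)\<close> for
  \<open>n \<ge> 2\<close>; at \<open>n = 0\<close> the truncated subtraction gives the correct value \<open>0\<close>.\<close>
definition occ_difference :: "(nat \<Rightarrow> 'a) \<Rightarrow> 'a \<Rightarrow> nat \<Rightarrow> nat" where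
  "occ_difference w a n = (if n = 1 then occ_pos w a 1 else occ_pos w a n - occ_pos w a (n - 1))"

lemma difference_pos_series:
  assumes "infinite {i. w i = a}"
  shows "ratpoly_fps [:1, -1:] * pos_series w a = Abs_fps (\<lambda>n. of_nat (occ_difference w a n))"
proof (rule fps_ext)
  fix n
  have "ratpoly_fps [:1, -1:] = 1 - fps_X"
    by (rule fps_ext) (simp add: ratpoly_fps_nth coeff_pCons split: nat.split)
  then have "ratpoly_fps [:1, -1:] * pos_series w a = pos_series w a - fps_X * pos_series w a"
    by (simp add: left_diff_distrib)
  then have "(ratpoly_fps [:1, -1:] * pos_series w a) $ n
      = pos_series w a $ n - (if n = 0 then 0 else pos_series w a $ (n - 1))"
    by (simp add: fps_X_mult_nth)
  moreover have "occ_pos w a (n - 1) \<le> occ_pos w a n"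
    using assms by (simp add: occ_pos_def)
  ultimately show "(ratpoly_fps [:1, -1:] * pos_series w a) $ n
      = Abs_fps (\<lambda>n. of_nat (occ_difference w a n)) $ n"
    by (auto simp: pos_series_def occ_difference_def of_nat_diff)
qed

lemma finite_range_occ_difference:
  assumes "finite {occ_pos w a n - occ_pos w a (n - 1) | n. n \<ge> 2}"
  shows "finite (range (occ_difference w a))"
proof -
  have "occ_difference w a n
      \<in> {0, occ_pos w a 1} \<union> {occ_pos w a n - occ_pos w a (n - 1) | n. n \<ge> 2}" for n
  proof (cases "n \<ge> 2")
    case False
    then have "n = 0 \<or> n = 1" by auto
    then show ?thesis by (auto simp: occ_difference_def)
  qed (auto simp: occ_difference_def)
  then have "range (occ_difference w a)
      \<subseteq> {0, occ_pos w a 1} \<union> {occ_pos w a n - occ_pos w a (n - 1) | n. n \<ge> 2}"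
    by (simp add: image_subset_iff)
  then show ?thesis by (rule finite_subset) (use assms in simp)
qed

lemma eventually_periodic_occ_difference_iff:
  assumes "infinite {i. w i = a}"
  shows "eventually_periodic (occ_difference w a) \<longleftrightarrow> eventually_periodic (indicator_seq w a)"
proof -
  define S where "S = {i. w i = a}"
  have "infinite S" using assms by (simp add: S_def)
  have "occ_difference w a (k + 2) = enumerate S (Suc k) - enumerate S k" for k
    by (simp add: occ_difference_def occ_pos_def S_def)
  then have "eventually_periodic (occ_difference w a)
      \<longleftrightarrow> eventually_periodic (\<lambda>k. enumerate S (Suc k) - enumerate S k)"
    using eventually_periodic_shift_iff[of "occ_difference w a" 2] by simp
  also have "\<dots> \<longleftrightarrow> eventually_periodic (\<lambda>i. i \<in> S)"
    using eventually_periodic_mem_iff_gaps[OF \<open>infinite S\<close>] by simp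
  also have "\<dots> \<longleftrightarrow> eventually_periodic ((\<lambda>b. if b then 1 else 0 :: nat) \<circ> (\<lambda>i. i \<in> S))"
    by (rule eventually_periodic_comp_inj_iff[symmetric]) (simp add: inj_def)
  also have "(\<lambda>b. if b then 1 else 0 :: nat) \<circ> (\<lambda>i. i \<in> S) = indicator_seq w a"
    by (auto simp: indicator_seq_def S_def)
  finally show ?thesis .
qed

theorem corollary3p6:
  fixes w :: "nat \<Rightarrow> 'a::finite" and a :: 'a
  assumes "infinite {i. w i = a}"
    and "finite {occ_pos w a n - occ_pos w a (n - 1) | n. n \<ge> 2}"
  shows "(eventually_periodic (indicator_seq w a) \<longrightarrow> in_rat_fun_field (pos_series w a))
       \<and> (\<not> eventually_periodic (indicator_seq w a) \<longrightarrow> transcendental_rat_fun (pos_series w a))"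
proof -
  note series = difference_pos_series[OF assms(1)]
  note periodic_iff = eventually_periodic_occ_difference_iff[OF assms(1), symmetric]
  show ?thesis
  proof (intro conjI impI)
    assume "eventually_periodic (indicator_seq w a)"
    then have "in_rat_fun_field (Abs_fps (\<lambda>n. of_rat (of_nat (occ_difference w a n))))"
      by (intro eventually_periodic_imp_in_rat_fun_field)
        (simp add: periodic_iff eventually_periodic_of_nat_iff)
    then have "in_rat_fun_field (ratpoly_fps [:1, -1:] * pos_series w a)" by (simp add: series)
    then show "in_rat_fun_field (pos_series w a)" by (rule in_rat_fun_field_cancel[rotated]) simp
  next
    assume aperiodic: "\<not> eventually_periodic (indicator_seq w a)"
    show "transcendental_rat_fun (pos_series w a)"
    proof (rule ccontr)
      assume "\<not> transcendental_rat_fun (pos_series w a)"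
      then have "algebraic_fps (Abs_fps (\<lambda>n. of_nat (occ_difference w a n) :: complex))"
        unfolding series[symmetric] ratpoly_fps_def
        by (intro algebraic_fps_poly_mult not_transcendental_imp_algebraic)
          (simp_all add: map_poly_eq_0_iff)
      moreover have "finite (range (\<lambda>n. of_nat (occ_difference w a n) :: complex))"
        using finite_imageI[OF finite_range_occ_difference[OF assms(2)], of of_nat]
        by (simp add: image_image)
      ultimately have "eventually_periodic (\<lambda>n. of_nat (occ_difference w a n) :: complex)"
        using algebraic_finite_range_imp_eventually_periodic[of "Abs_fps (\<lambda>n. of_nat (occ_difference w a n))"]
        by simp
      then show False using aperiodic by (simp add: periodic_iff eventually_periodic_of_nat_iff)
    qed
  qed
qed

end
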